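(* Fix $\mu\in(0,1)$, $j\in\{2,3\}$, $T^*>0$ and relatively prime positive integers $a,b$ with $aT^*=b\pi$. Let $\mathbf{X}^*=(x^*,y^*,z^*,x^{*\prime},y^{*\prime},z^{*\prime})$ be a $T^*$-periodic function $\mathbb{R}\to\mathbb{R}^6$, with $\mathbf{r}^*=(x^*,y^*,z^* )$ of class $C^1$ avoiding $(-\mu,0,0)$ and $(1-\mu,0,0)$. Let $s\in\mathbb{R}$ satisfy the half-period symmetry conditions: for all $\tau\in[0,T^*/2]$, $$x^*(s+T^*-\tau)=x^*(s+\tau),\quad x^{*\prime}(s+T^*-\tau)=-x^{*\prime}(s+\tau),$$ $$y^*(s+T^*-\tau)=-y^*(s+\tau),\quad y^{*\prime}(s+T^*-\tau)=y^{*\prime}(s+\tau),$$ $$z^*(s+T^*-\tau)\,z^{*\prime}(s+T^*-\tau)=-z^*(s+\tau)\,z^{*\prime}(s+\tau).$$ Let $\mathcal{M}(s,\tau_0)=\int_0^{aT^*}\mathbf{h}_j(\mathbf{X}^*(s+\tau),\tau_0+\tau)\cdot\mathbf{r}^{*\prime}(s+\tau)\,d\tau$. Then for every $\tau_0\in\mathbb{R}$, $$\mathcal{M}(s,\tau_0)=2AB,\qquad A=\begin{cases}\sin(2\tau_0),& a=1,\\ 0,&a>1,\end{cases}$$ $$B=\int_0^{T^*/2}\Big(K_j\big(\mathbf{X}^*(s+\tau)\big)\cos(2\tau)-J_j\big(\mathbf{X}^*(s+\tau)\big)\sin(2\tau)\Big)\,d\tau.$$ In particular, if $a>1$ then $\mathcal{M}(s',\tau_0)=0$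 for all $s',\tau_0$, and if $a=1$ then $\mathcal{M}(s,\tau_0)=0$ whenever $\tau_0\in\frac{\pi}{2}\mathbb{Z}$.
   Context: For $\mathbf{r}=(x,y,z)$ write $\mathbf{R}_{1-\mu}=(x+\mu,y,z)$, $\mathbf{R}_\mu=(x-1+\mu,y,z)$, $R_{1-\mu}=|\mathbf{R}_{1-\mu}|$, $R_\mu=|\mathbf{R}_\mu|$, and $P(\mathbf{r})=\big(\frac{1-\mu}{R_{1-\mu}^3}-\frac{\mu}{R_\mu^3}\big)I_3-\frac{3}{R_{1-\mu}^5}\mathbf{R}_{1-\mu}\mathbf{R}_{1-\mu}^T+\frac{3}{R_\mu^5}\mathbf{R}_\mu\mathbf{R}_\mu^T$. For $\mathbf{X}=(\mathbf{r},\mathbf{r}')$, $\mathbf{r}'=(x',y',z')$: $\mathbf{h}_2(\mathbf{X},\alpha)=-\frac32\begin{bmatrix}-\cos2\alpha&\sin2\alpha&0\\ \sin2\alpha&\cos2\alpha&0\\0&0&2/3\end{bmatrix}\mathbf{r}-\frac18(1-\mu)\mu P(\mathbf{r})(-8\cos2\alpha,11\sin2\alpha,0)^T$, and $\mathbf{h}_3(\mathbf{X},\alpha)=-\frac1{12}(1-\mu)\mu P(\mathbf{r})(-38\cos2\alpha,59\sin2\alpha,0)^T$. With $\mathbf{e}_1=(1,0,0)^T$, $\mathbf{e}_2=(0,1,0)^T$, define $J_2(\mathbf{X})=\tfrac32(xx'-yy')+(1-\mu)\mu\,(P(\mathbf{r})\mathbf{e}_1)\cdot\mathbf{r}'$,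 $K_2(\mathbf{X})=-\tfrac32(yx'+xy')-\tfrac{11}{8}(1-\mu)\mu\,(P(\mathbf{r})\mathbf{e}_2)\cdot\mathbf{r}'$, $J_3(\mathbf{X})=\tfrac{38}{12}(1-\mu)\mu\,(P(\mathbf{r})\mathbf{e}_1)\cdot\mathbf{r}'$, $K_3(\mathbf{X})=-\tfrac{59}{12}(1-\mu)\mu\,(P(\mathbf{r})\mathbf{e}_2)\cdot\mathbf{r}'$, so that $\mathbf{h}_2(\mathbf{X},\alpha)\cdot\mathbf{r}'=J_2\cos2\alpha+K_2\sin2\alpha-zz'$ and $\mathbf{h}_3(\mathbf{X},\alpha)\cdot\mathbf{r}'=J_3\cos2\alpha+K_3\sin2\alpha$. These are the leading-order Melnikov perturbation terms of the Hill Restricted 4-Body Problem (forcing period $\pi$). *)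

theory Defs
  imports "HOL-Analysis.Analysis"
begin

text \<open>Hill Restricted 4-Body Problem: leading-order Melnikov perturbation terms.
  Points of R^3 are \<open>real^3\<close>, a phase point X = (r, r') is a pair.\<close>

definition Rone :: "real \<Rightarrow> real^3 \<Rightarrow> real^3" where
  "Rone \<mu> r = vector [r$1 + \<mu>, r$2, r$3]"

definition Rmu :: "real \<Rightarrow> real^3 \<Rightarrow> real^3" where
  "Rmu \<mu> r = vector [r$1 - 1 + \<mu>, r$2, r$3]"

definition Pmat :: "real \<Rightarrow> real^3 \<Rightarrow> real^3^3" where
  "Pmat \<mu> r =
     ((1 - \<mu>) / norm (Rone \<mu> r) ^ 3 - \<mu> / norm (Rmu \<mu> r) ^ 3) *\<^sub>R mat 1
     - (3 / norm (Rone \<mu> r) ^ 5) *\<^sub>R (\<chi> i k. (Rone \<mu> r)$i * (Rone \<mu> r)$k)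
     + (3 / norm (Rmu \<mu> r) ^ 5) *\<^sub>R (\<chi> i k. (Rmu \<mu> r)$i * (Rmu \<mu> r)$k)"

definition e1 :: "real^3" where "e1 = vector [1, 0, 0]"
definition e2 :: "real^3" where "e2 = vector [0, 1, 0]"

definition h2 :: "real \<Rightarrow> (real^3) \<times> (real^3) \<Rightarrow> real \<Rightarrow> real^3" where
  "h2 \<mu> X \<alpha> =
     - (3/2) *\<^sub>R ((vector [vector [- cos (2*\<alpha>), sin (2*\<alpha>), 0],
                           vector [sin (2*\<alpha>), cos (2*\<alpha>), 0],
                           vector [0, 0, 2/3]] :: real^3^3) *v fst X)
     - ((1/8) * (1 - \<mu>) * \<mu>) *\<^sub>R
         (Pmat \<mu> (fst X) *v vector [- 8 * cos (2*\<alpha>), 11 * sin (2*\<alpha>), 0])"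

definition h3 :: "real \<Rightarrow> (real^3) \<times> (real^3) \<Rightarrow> real \<Rightarrow> real^3" where
  "h3 \<mu> X \<alpha> =
     - ((1/12) * (1 - \<mu>) * \<mu>) *\<^sub>R
         (Pmat \<mu> (fst X) *v vector [- 38 * cos (2*\<alpha>), 59 * sin (2*\<alpha>), 0])"

definition J2 :: "real \<Rightarrow> (real^3) \<times> (real^3) \<Rightarrow> real" where
  "J2 \<mu> X = (let r = fst X; v = snd X in
     (3/2) * (r$1 * v$1 - r$2 * v$2) + (1 - \<mu>) * \<mu> * ((Pmat \<mu> r *v e1) \<bullet> v))"

definition K2 :: "real \<Rightarrow> (real^3) \<times> (real^3) \<Rightarrow> real" where
  "K2 \<mu> X = (let r = fst X; v = snd X in
     - (3/2) * (r$2 * v$1 + r$1 * v$2) - (11/8) * (1 - \<mu>) * \<mu> * ((Pmat \<mu> r *v e2) \<bullet> v))"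

definition J3 :: "real \<Rightarrow> (real^3) \<times> (real^3) \<Rightarrow> real" where
  "J3 \<mu> X = (38/12) * (1 - \<mu>) * \<mu> * ((Pmat \<mu> (fst X) *v e1) \<bullet> snd X)"

definition K3 :: "real \<Rightarrow> (real^3) \<times> (real^3) \<Rightarrow> real" where
  "K3 \<mu> X = - (59/12) * (1 - \<mu>) * \<mu> * ((Pmat \<mu> (fst X) *v e2) \<bullet> snd X)"

definition hj :: "nat \<Rightarrow> real \<Rightarrow> (real^3) \<times> (real^3) \<Rightarrow> real \<Rightarrow> real^3" where
  "hj j \<mu> X \<alpha> = (if j = 2 then h2 \<mu> X \<alpha> else h3 \<mu> X \<alpha>)"
definition Jj :: "nat \<Rightarrow> real \<Rightarrow> (real^3) \<times> (real^3) \<Rightarrow> real" where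
  "Jj j \<mu> X = (if j = 2 then J2 \<mu> X else J3 \<mu> X)"
definition Kj :: "nat \<Rightarrow> real \<Rightarrow> (real^3) \<times> (real^3) \<Rightarrow> real" where
  "Kj j \<mu> X = (if j = 2 then K2 \<mu> X else K3 \<mu> X)"

text \<open>Melnikov function M(s, tau0) along the orbit t \<mapsto> (r t, v t), v = r'.\<close>
definition melnikov ::
  "nat \<Rightarrow> real \<Rightarrow> (real \<Rightarrow> real^3) \<Rightarrow> (real \<Rightarrow> real^3) \<Rightarrow> real \<Rightarrow> real \<Rightarrow> real \<Rightarrow> real" where
  "melnikov j \<mu> r v L s \<tau>0 =
     integral {0..L} (\<lambda>\<tau>. hj j \<mu> (r (s + \<tau>), v (s + \<tau>)) (\<tau>0 + \<tau>) \<bullet> v (s + \<tau>))"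

end

theory Submission
  imports Defs
begin

text \<open>Along the orbit \<open>h\<^sub>j \<cdot> r' = J cos 2\<alpha> + K sin 2\<alpha> - [j = 2] z z'\<close>, and \<open>z z' = (z\<^sup>2/2)'\<close>
  integrates to zero over whole periods. Each period contributes \<open>cos(\<phi>) C + sin(\<phi>) S\<close> to the
  integral of \<open>J cos(\<phi> + 2\<tau>) + K sin(\<phi> + 2\<tau>)\<close>, the phase \<open>\<phi>\<close> advancing by \<open>2T\<close> from one period
  to the next. If \<open>a > 1\<close>, then \<open>exp(2iT)\<close> is a nontrivial \<open>a\<close>-th root of unity because
  \<open>gcd(a, b) = 1\<close>, so the \<open>a\<close> contributions cancel. If \<open>a = 1\<close>, then \<open>T\<close> is a multiple of \<open>\<pi>\<close>,
  and the reflection \<open>\<tau> \<mapsto> T - \<tau>\<close> makes \<open>J\<close> odd and \<open>K\<close> even (\<open>z\<^sup>2\<close> is symmetric since \<open>z z'\<close>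
  is antisymmetric); this folds the integral over \<open>[0, T]\<close> onto \<open>[0, T/2]\<close> and kills \<open>C\<close>.\<close>

subsection \<open>Integrals of periodic functions against \<open>cos(\<phi> + 2\<tau>)\<close> and \<open>sin(\<phi> + 2\<tau>)\<close>\<close>

lemma periodic_add_nat_multiple:
  assumes "\<And>t. f (t + T) = f t"
  shows "f (t + real n * T) = f t"
proof (induction n)
  case (Suc n)
  have "f (t + real (Suc n) * T) = f ((t + real n * T) + T)"
    by (simp add: algebra_simps)
  with Suc show ?case
    by (simp add: assms)
qed simp

lemma integrable_on_interval_if_continuous_on_UNIV:
  fixes f :: "real \<Rightarrow> 'a::banach"
  shows "continuous_on UNIV f \<Longrightarrow> f integrable_on {a..b}"
  by (simp add: continuous_on_subset integrable_continuous_interval)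

lemma continuous_on_UNIV_shift:
  fixes f :: "real \<Rightarrow> 'a::topological_space"
  shows "continuous_on UNIV f \<Longrightarrow> continuous_on UNIV (\<lambda>\<tau>. f (s + \<tau>))"
  by (rule continuous_on_compose2) (auto intro: continuous_intros)

lemma integral_derivative_periodic_eq_0:
  fixes f f' :: "real \<Rightarrow> real"
  assumes f': "\<And>t. (f has_real_derivative f' t) (at t)"
    and per: "f (s + L) = f s" and L: "0 \<le> L"
  shows "integral {0..L} (\<lambda>\<tau>. f' (s + \<tau>)) = 0"
proof -
  have "((\<lambda>\<tau>. f' (s + \<tau>)) has_integral f (s + L) - f (s + 0)) {0..L}"
  proof (rule fundamental_theorem_of_calculus[OF L])
    fix x
    have "((\<lambda>\<tau>. f (s + \<tau>)) has_real_derivative f' (s + x) * 1) (at x)"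
      by (rule DERIV_chain2[OF f']) (auto intro!: derivative_eq_intros)
    then show "((\<lambda>\<tau>. f (s + \<tau>)) has_vector_derivative f' (s + x)) (at x within {0..L})"
      using has_field_derivative_at_within has_real_derivative_iff_has_vector_derivative by fastforce
  qed
  with per show ?thesis
    by (simp add: integral_unique)
qed

lemma integral_cos_sin_phase:
  fixes J K :: "real \<Rightarrow> real"
  assumes J: "continuous_on UNIV J" and K: "continuous_on UNIV K"
  shows "integral {0..T} (\<lambda>\<tau>. J \<tau> * cos (\<phi> + 2*\<tau>) + K \<tau> * sin (\<phi> + 2*\<tau>))
     = cos \<phi> * integral {0..T} (\<lambda>\<tau>. J \<tau> * cos (2*\<tau>) + K \<tau> * sin (2*\<tau>))
     + sin \<phi> * integral {0..T} (\<lambda>\<tau>. K \<tau> * cos (2*\<tau>) - J \<tau> * sin (2*\<tau>))"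
proof -
  have "(\<lambda>\<tau>. J \<tau> * cos (2*\<tau>) + K \<tau> * sin (2*\<tau>)) integrable_on {0..T}"
    "(\<lambda>\<tau>. K \<tau> * cos (2*\<tau>) - J \<tau> * sin (2*\<tau>)) integrable_on {0..T}"
    by (intro integrable_on_interval_if_continuous_on_UNIV
        continuous_intros J K)+
  moreover have "(\<lambda>\<tau>. J \<tau> * cos (\<phi> + 2*\<tau>) + K \<tau> * sin (\<phi> + 2*\<tau>)) =
      (\<lambda>\<tau>. cos \<phi> * (J \<tau> * cos (2*\<tau>) + K \<tau> * sin (2*\<tau>))
         + sin \<phi> * (K \<tau> * cos (2*\<tau>) - J \<tau> * sin (2*\<tau>)))"
    by (simp add: cos_add sin_add algebra_simps)
  ultimately show ?thesis
    by (simp add: Henstock_Kurzweil_Integration.integral_add integrable_on_mult_right)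
qed

lemma integral_cos_sin_nat_multiple_period:
  fixes J K :: "real \<Rightarrow> real"
  assumes J: "continuous_on UNIV J" and K: "continuous_on UNIV K" and T: "T > 0"
    and perJ: "\<And>t. J (t + T) = J t" and perK: "\<And>t. K (t + T) = K t"
  shows "integral {0..real n * T} (\<lambda>\<tau>. J \<tau> * cos (\<phi> + 2*\<tau>) + K \<tau> * sin (\<phi> + 2*\<tau>))
     = (\<Sum>k<n. cos (\<phi> + real k * (2*T))) * integral {0..T} (\<lambda>\<tau>. J \<tau> * cos (2*\<tau>) + K \<tau> * sin (2*\<tau>))
     + (\<Sum>k<n. sin (\<phi> + real k * (2*T))) * integral {0..T} (\<lambda>\<tau>. K \<tau> * cos (2*\<tau>) - J \<tau> * sin (2*\<tau>))"
proof (induction n)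
  case (Suc n)
  let ?F = "\<lambda>\<tau>. J \<tau> * cos (\<phi> + 2*\<tau>) + K \<tau> * sin (\<phi> + 2*\<tau>)"
  let ?\<psi> = "\<phi> + real n * (2*T)"
  have "?F integrable_on {0..real (Suc n) * T}"
    by (intro integrable_on_interval_if_continuous_on_UNIV
        continuous_intros J K)
  then have "integral {0..real (Suc n) * T} ?F
      = integral {0..real n * T} ?F + integral {real n * T..real (Suc n) * T} ?F"
    using Henstock_Kurzweil_Integration.integral_combine[of 0 "real n * T" "real (Suc n) * T" ?F] T
    by (simp add: mult_right_mono)
  also have "integral {real n * T..real (Suc n) * T} ?F = integral {0..T} (\<lambda>\<tau>. ?F (\<tau> + real n * T))"
    using integral_shift_real_ivl[of "real n * T" "real n * T" "real (Suc n) * T" ?F]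
    by (simp add: algebra_simps)
  also have "(\<lambda>\<tau>. ?F (\<tau> + real n * T)) = (\<lambda>\<tau>. J \<tau> * cos (?\<psi> + 2*\<tau>) + K \<tau> * sin (?\<psi> + 2*\<tau>))"
    by (simp add: periodic_add_nat_multiple[of J, OF perJ] periodic_add_nat_multiple[of K, OF perK],
        simp add: algebra_simps)
  also have "integral {0..T} \<dots>
      = cos ?\<psi> * integral {0..T} (\<lambda>\<tau>. J \<tau> * cos (2*\<tau>) + K \<tau> * sin (2*\<tau>))
      + sin ?\<psi> * integral {0..T} (\<lambda>\<tau>. K \<tau> * cos (2*\<tau>) - J \<tau> * sin (2*\<tau>))"
    by (rule integral_cos_sin_phase[OF J K])
  finally show ?case
    using Suc by (simp add: distrib_right)
qed simp

lemma sum_cos_sin_root_of_unity_eq_0: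
  fixes x \<phi> :: real
  assumes "cis x \<noteq> 1" "cis x ^ n = 1"
  shows "(\<Sum>k<n. cos (\<phi> + real k * x)) = 0" "(\<Sum>k<n. sin (\<phi> + real k * x)) = 0"
proof -
  have "(\<Sum>k<n. cis (\<phi> + real k * x)) = cis \<phi> * (\<Sum>k<n. cis x ^ k)"
    unfolding sum_distrib_left by (rule sum.cong) (simp_all only: Complex.DeMoivre cis_mult)
  also have "(\<Sum>k<n. cis x ^ k) = 0"
    using assms by (simp add: geometric_sum)
  finally have "(\<Sum>k<n. cis (\<phi> + real k * x)) = 0"
    by simp
  then have "Re (\<Sum>k<n. cis (\<phi> + real k * x)) = 0" "Im (\<Sum>k<n. cis (\<phi> + real k * x)) = 0"
    by simp_all
  then show "(\<Sum>k<n. cos (\<phi> + real k * x)) = 0" "(\<Sum>k<n. sin (\<phi> + real k * x)) = 0"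
    by simp_all
qed

lemma cis_double_ne_1_if_coprime:
  fixes a b :: nat
  assumes a: "a > 1" and cop: "coprime a b" and ab: "real a * T = real b * pi"
  shows "cis (2*T) \<noteq> 1"
proof
  assume "cis (2*T) = 1"
  then have "cos (2*T) = 1"
    by (metis cis.sel(1) one_complex.sel(1))
  then obtain n :: int where "2*T = real_of_int n * 2 * pi"
    using cos_one_2pi_int by blast
  with ab have "real a * n = real b"
    by simp
  then have "int a * n = int b"
    by (metis of_int_eq_iff of_int_mult of_int_of_nat_eq)
  then have "a dvd b"
    by (metis dvd_triv_left int_dvd_int_iff)
  with cop a show False
    by (simp add: coprime_absorb_left)
qed

lemma integral_cos_sin_coprime_multiple_period_eq_0:
  fixes J K :: "real \<Rightarrow> real" and a b :: nat
  assumes J: "continuous_on UNIV J" and K: "continuous_on UNIV K" and T: "T > 0"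
    and perJ: "\<And>t. J (t + T) = J t" and perK: "\<And>t. K (t + T) = K t"
    and a: "a > 1" and cop: "coprime a b" and ab: "real a * T = real b * pi"
  shows "integral {0..real a * T} (\<lambda>\<tau>. J \<tau> * cos (\<phi> + 2*\<tau>) + K \<tau> * sin (\<phi> + 2*\<tau>)) = 0"
proof -
  have "real a * (2*T) = 2 * pi * real b"
    using ab by (simp add: algebra_simps)
  then have "cis (2*T) ^ a = cis (2 * pi * real b)"
    by (simp only: Complex.DeMoivre)
  also have "\<dots> = 1"
    by (rule cis_multiple_2pi) simp
  finally have "cis (2*T) ^ a = 1" .
  with cis_double_ne_1_if_coprime[OF a cop ab] show ?thesis
    by (simp add: integral_cos_sin_nat_multiple_period[where J = J and K = K, OF J K T perJ perK]
        sum_cos_sin_root_of_unity_eq_0)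
qed

lemma integral_cos_sin_reflection_symmetric:
  fixes J K :: "real \<Rightarrow> real" and b :: nat
  assumes J: "continuous_on UNIV J" and K: "continuous_on UNIV K" and T: "T > 0"
    and Tb: "T = real b * pi"
    and symJ: "\<And>\<tau>. 0 \<le> \<tau> \<Longrightarrow> \<tau> \<le> T/2 \<Longrightarrow> J (T - \<tau>) = - J \<tau>"
    and symK: "\<And>\<tau>. 0 \<le> \<tau> \<Longrightarrow> \<tau> \<le> T/2 \<Longrightarrow> K (T - \<tau>) = K \<tau>"
  shows "integral {0..T} (\<lambda>\<tau>. J \<tau> * cos (\<phi> + 2*\<tau>) + K \<tau> * sin (\<phi> + 2*\<tau>))
     = 2 * sin \<phi> * integral {0..T/2} (\<lambda>\<tau>. K \<tau> * cos (2*\<tau>) - J \<tau> * sin (2*\<tau>))"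
proof -
  let ?F = "\<lambda>\<tau>. J \<tau> * cos (\<phi> + 2*\<tau>) + K \<tau> * sin (\<phi> + 2*\<tau>)"
  have cF: "continuous_on UNIV ?F"
    by (intro continuous_intros J K)
  have intF: "\<And>u w. ?F integrable_on {u..w}"
    by (rule integrable_on_interval_if_continuous_on_UNIV[OF cF])
  have "(\<lambda>\<tau>. ?F (T - \<tau>)) integrable_on {0..T/2}"
    by (intro integrable_on_interval_if_continuous_on_UNIV
        continuous_on_compose2[OF cF] continuous_intros) auto
  have "integral {0..T} ?F = integral {0..T/2} ?F + integral {T/2..T} ?F"
    using Henstock_Kurzweil_Integration.integral_combine[OF _ _ intF, of 0 "T/2" T] T by simp
  also have "integral {T/2..T} ?F = integral {-(T/2)..0} (\<lambda>\<tau>. ?F (\<tau> + T))"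
    using integral_shift_real_ivl[of "T/2" T T ?F] by simp
  also have "\<dots> = integral {0..T/2} (\<lambda>\<tau>. ?F (T - \<tau>))"
    using Henstock_Kurzweil_Integration.integral_reflect_real[of 0 "-(T/2)" "\<lambda>\<tau>. ?F (\<tau> + T)"] by simp
  also have "integral {0..T/2} ?F + \<dots> = integral {0..T/2} (\<lambda>\<tau>. ?F \<tau> + ?F (T - \<tau>))"
    using intF \<open>(\<lambda>\<tau>. ?F (T - \<tau>)) integrable_on {0..T/2}\<close> by (simp add: Henstock_Kurzweil_Integration.integral_add)
  also have "\<dots> = integral {0..T/2} (\<lambda>\<tau>. 2 * sin \<phi> * (K \<tau> * cos (2*\<tau>) - J \<tau> * sin (2*\<tau>)))"
  proof (rule integral_cong)
    fix \<tau> assume "\<tau> \<in> {0..T/2}"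
    then have \<tau>: "0 \<le> \<tau>" "\<tau> \<le> T/2"
      by auto
    have shift: "\<phi> + 2 * (T - \<tau>) = (\<phi> - 2*\<tau>) + 2 * pi * real b"
      using Tb by (simp add: algebra_simps)
    have cos_reflect: "cos (\<phi> + 2 * (T - \<tau>)) = cos (\<phi> - 2*\<tau>)"
      and sin_reflect: "sin (\<phi> + 2 * (T - \<tau>)) = sin (\<phi> - 2*\<tau>)"
      unfolding shift by (simp_all add: cos_add sin_add cos_integer_2pi sin_integer_2pi)
    show "?F \<tau> + ?F (T - \<tau>) = 2 * sin \<phi> * (K \<tau> * cos (2*\<tau>) - J \<tau> * sin (2*\<tau>))"
      unfolding cos_reflect sin_reflect symJ[OF \<tau>] symK[OF \<tau>]
      by (simp add: cos_add sin_add cos_diff sin_diff algebra_simps)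
  qed
  finally show ?thesis
    by simp
qed

lemma square_reflection_eq_if_product_antisymmetric:
  fixes g g' :: "real \<Rightarrow> real"
  assumes g': "\<And>t. (g has_real_derivative g' t) (at t)"
    and anti: "\<And>\<tau>. 0 \<le> \<tau> \<Longrightarrow> \<tau> \<le> L/2 \<Longrightarrow>
      g (c + L - \<tau>) * g' (c + L - \<tau>) = - (g (c + \<tau>) * g' (c + \<tau>))"
    and \<tau>: "0 \<le> \<tau>" "\<tau> \<le> L/2"
  shows "g (c + L - \<tau>)^2 = g (c + \<tau>)^2"
proof -
  define d where "d x = g (c + L - x)^2 - g (c + x)^2" for x
  have "((\<lambda>x. g (c + L - x)) has_real_derivative g' (c + L - x) * -1) (at x)" for x
    by (rule DERIV_chain2[OF g']) (auto intro!: derivative_eq_intros)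
  moreover have "((\<lambda>x. g (c + x)) has_real_derivative g' (c + x) * 1) (at x)" for x
    by (rule DERIV_chain2[OF g']) (auto intro!: derivative_eq_intros)
  ultimately have deriv_d: "(d has_real_derivative
      2 * (g (c + L - x) * - g' (c + L - x)) - 2 * (g (c + x) * g' (c + x))) (at x)" for x
    unfolding d_def by (auto intro!: derivative_eq_intros)
  have "d (L/2) = d \<tau>"
  proof (cases "\<tau> < L/2")
    case True
    show ?thesis
    proof (rule DERIV_isconst2[OF True])
      show "continuous_on {\<tau>..L/2} d"
        using deriv_d by (meson DERIV_isCont continuous_at_imp_continuous_on)
      show "(d has_real_derivative 0) (at x)" if "\<tau> < x" "x < L/2" for x
        using deriv_d[of x] anti[of x] that \<tau> by simp
    qed (use \<tau> in simp_all)
  next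
    case False
    with \<tau> have "\<tau> = L/2"
      by linarith
    then show ?thesis
      by (simp only:)
  qed
  moreover have "d (L/2) = 0"
    by (simp add: d_def add.commute)
  ultimately show ?thesis
    by (simp add: d_def)
qed

subsection \<open>The Melnikov integrand in coordinates\<close>

lemma inner_matrix3_mult:
  "((vector [vector [a1, b1, c1], vector [a2, b2, c2], vector [a3, b3, c3]] :: real^3^3) *v x) \<bullet> v
   = (a1 * x$1 + b1 * x$2 + c1 * x$3) * v$1 + (a2 * x$1 + b2 * x$2 + c2 * x$3) * v$2
     + (a3 * x$1 + b3 * x$2 + c3 * x$3) * v$3"
  by (simp add: matrix_vector_mult_def inner_vec_def sum_3)

lemma inner_matrix_mult_planar:
  "((M::real^3^3) *v vector [p, q, 0]) \<bullet> v = p * ((M *v e1) \<bullet> v) + q * ((M *v e2) \<bullet> v)"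
  by (simp add: matrix_vector_mult_def inner_vec_def sum_3 e1_def e2_def algebra_simps)

lemma hj_inner_velocity:
  "hj j \<mu> (r, v) \<alpha> \<bullet> v
   = Jj j \<mu> (r, v) * cos (2*\<alpha>) + Kj j \<mu> (r, v) * sin (2*\<alpha>) - (if j = 2 then r$3 * v$3 else 0)"
  unfolding hj_def Jj_def Kj_def h2_def h3_def J2_def K2_def J3_def K3_def Let_def fst_conv snd_conv
  by (cases "j = 2"; simp only: simp_thms if_True if_False inner_diff_left inner_minus_left
      inner_scaleR_left inner_matrix_mult_planar inner_matrix3_mult; simp add: field_simps)

text \<open>\<open>(P(r) e\<^sub>k) \<cdot> r'\<close> as a function of \<open>x, y, z\<^sup>2, z z', x', y'\<close>: the reflection symmetry
  controls \<open>z\<close> only through \<open>z\<^sup>2\<close> and \<open>z z'\<close>.\<close>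

definition shifted_norm :: "real \<Rightarrow> real \<Rightarrow> real \<Rightarrow> real \<Rightarrow> real" where
  "shifted_norm c x y zz = sqrt ((x + c)^2 + y^2 + zz)"

definition Pe1_inner :: "real \<Rightarrow> real \<Rightarrow> real \<Rightarrow> real \<Rightarrow> real \<Rightarrow> real \<Rightarrow> real \<Rightarrow> real" where
  "Pe1_inner \<mu> x y zz zv xv yv =
    (let n1 = shifted_norm \<mu> x y zz; n2 = shifted_norm (\<mu> - 1) x y zz;
         p = x + \<mu>; q = x - 1 + \<mu>; c = (1 - \<mu>) / n1^3 - \<mu> / n2^3 in
     (c - 3*p^2/n1^5 + 3*q^2/n2^5) * xv + (-3*p*y/n1^5 + 3*q*y/n2^5) * yv
     + (-3*p/n1^5 + 3*q/n2^5) * zv)"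

definition Pe2_inner :: "real \<Rightarrow> real \<Rightarrow> real \<Rightarrow> real \<Rightarrow> real \<Rightarrow> real \<Rightarrow> real \<Rightarrow> real" where
  "Pe2_inner \<mu> x y zz zv xv yv =
    (let n1 = shifted_norm \<mu> x y zz; n2 = shifted_norm (\<mu> - 1) x y zz;
         p = x + \<mu>; q = x - 1 + \<mu>; c = (1 - \<mu>) / n1^3 - \<mu> / n2^3 in
     (-3*p*y/n1^5 + 3*q*y/n2^5) * xv + (c - 3*y^2/n1^5 + 3*y^2/n2^5) * yv
     + (-3*y/n1^5 + 3*y/n2^5) * zv)"

lemma norm_vec3: "norm (x::real^3) = sqrt ((x$1)^2 + (x$2)^2 + (x$3)^2)"
  by (simp add: norm_eq_sqrt_inner inner_vec_def sum_3 power2_eq_square)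

lemma norm_Rone: "norm (Rone \<mu> r) = shifted_norm \<mu> (r$1) (r$2) ((r$3)^2)"
  by (simp add: norm_vec3 Rone_def shifted_norm_def)

lemma norm_Rmu: "norm (Rmu \<mu> r) = shifted_norm (\<mu> - 1) (r$1) (r$2) ((r$3)^2)"
  by (simp add: norm_vec3 Rmu_def shifted_norm_def algebra_simps)

lemma Pmat_e1_inner:
  "(Pmat \<mu> r *v e1) \<bullet> v = Pe1_inner \<mu> (r$1) (r$2) ((r$3)^2) (r$3 * v$3) (v$1) (v$2)"
  unfolding Pmat_def Pe1_inner_def Let_def norm_Rone norm_Rmu
  by (simp add: matrix_vector_mult_def inner_vec_def sum_3 e1_def mat_def Rone_def Rmu_def
      power2_eq_square divide_inverse algebra_simps)

lemma Pmat_e2_inner: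
  "(Pmat \<mu> r *v e2) \<bullet> v = Pe2_inner \<mu> (r$1) (r$2) ((r$3)^2) (r$3 * v$3) (v$1) (v$2)"
  unfolding Pmat_def Pe2_inner_def Let_def norm_Rone norm_Rmu
  by (simp add: matrix_vector_mult_def inner_vec_def sum_3 e2_def mat_def Rone_def Rmu_def
      power2_eq_square divide_inverse algebra_simps)

lemma Jj_Kj_reflection:
  assumes "r'$1 = r$1" "v'$1 = - v$1" "r'$2 = - r$2" "v'$2 = v$2" "(r'$3)^2 = (r$3)^2"
    "r'$3 * v'$3 = - (r$3 * v$3)"
  shows "Jj j \<mu> (r', v') = - Jj j \<mu> (r, v)" "Kj j \<mu> (r', v') = Kj j \<mu> (r, v)"
  unfolding Jj_def J2_def J3_def Kj_def K2_def K3_def Let_def fst_conv snd_conv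
    Pmat_e1_inner Pmat_e2_inner assms
  by (simp_all add: Pe1_inner_def Pe2_inner_def Let_def shifted_norm_def algebra_simps)

lemma shifted_norm_nonzero:
  assumes "(r::real^3) \<noteq> vector [- c, 0, 0]"
  shows "shifted_norm c (r$1) (r$2) ((r$3)^2) \<noteq> 0"
proof
  assume "shifted_norm c (r$1) (r$2) ((r$3)^2) = 0"
  then have "(r$1 + c)^2 + (r$2)^2 + (r$3)^2 = 0"
    by (simp add: shifted_norm_def add_nonneg_nonneg)
  then have "r$1 = - c" "r$2 = 0" "r$3 = 0"
    by (smt (verit) zero_le_power2 zero_eq_power2)+
  then have "r = vector [- c, 0, 0]"
    by (simp add: vec_eq_iff forall_3)
  with assms show False ..
qed

lemma continuous_on_shifted_norm:
  "continuous_on UNIV x \<Longrightarrow> continuous_on UNIV y \<Longrightarrow> continuous_on UNIV zz \<Longrightarrow>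
   continuous_on UNIV (\<lambda>t. shifted_norm c (x t) (y t) (zz t))"
  unfolding shifted_norm_def by (intro continuous_intros)

lemma continuous_on_Pe_inner:
  assumes "continuous_on UNIV x" "continuous_on UNIV y" "continuous_on UNIV zz"
    "continuous_on UNIV zv" "continuous_on UNIV xv" "continuous_on UNIV yv"
    "\<And>t. shifted_norm \<mu> (x t) (y t) (zz t) \<noteq> 0" "\<And>t. shifted_norm (\<mu> - 1) (x t) (y t) (zz t) \<noteq> 0"
  shows "continuous_on UNIV (\<lambda>t. Pe1_inner \<mu> (x t) (y t) (zz t) (zv t) (xv t) (yv t))"
    "continuous_on UNIV (\<lambda>t. Pe2_inner \<mu> (x t) (y t) (zz t) (zv t) (xv t) (yv t))"
  unfolding Pe1_inner_def Pe2_inner_def Let_def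
  by (intro continuous_intros continuous_on_shifted_norm assms; simp add: assms)+

subsection \<open>The Melnikov integral along a periodic orbit\<close>

locale periodic_orbit =
  fixes \<mu> T :: real and r v :: "real \<Rightarrow> real^3"
  assumes period: "T > 0"
    and deriv: "\<And>t. (r has_vector_derivative v t) (at t)"
    and cont: "continuous_on UNIV v"
    and per: "\<And>t. r (t + T) = r t" "\<And>t. v (t + T) = v t"
    and avoid: "\<And>t. r t \<noteq> vector [- \<mu>, 0, 0]" "\<And>t. r t \<noteq> vector [1 - \<mu>, 0, 0]"
begin

lemma component_deriv: "((\<lambda>t. r t $ k) has_real_derivative v t $ k) (at t)"
  using bounded_linear.has_vector_derivative[OF bounded_linear_vec_nth deriv]
  by (simp add: has_real_derivative_iff_has_vector_derivative)

lemma continuous_on_components: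
  "continuous_on UNIV (\<lambda>t. r t $ k)" "continuous_on UNIV (\<lambda>t. v t $ k)"
proof -
  have "continuous_on UNIV r"
    using deriv has_vector_derivative_continuous continuous_at_imp_continuous_on by blast
  then show "continuous_on UNIV (\<lambda>t. r t $ k)" "continuous_on UNIV (\<lambda>t. v t $ k)"
    using cont by (auto intro: continuous_intros)
qed

lemma continuous_on_shifted_components:
  "continuous_on UNIV (\<lambda>\<tau>. r (s + \<tau>) $ k)" "continuous_on UNIV (\<lambda>\<tau>. v (s + \<tau>) $ k)"
  by (intro continuous_on_UNIV_shift continuous_on_components)+

lemma continuous_on_Jj_Kj:
  "continuous_on UNIV (\<lambda>t. Jj j \<mu> (r t, v t))" "continuous_on UNIV (\<lambda>t. Kj j \<mu> (r t, v t))"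
proof -
  have nonzero: "shifted_norm \<mu> (r t$1) (r t$2) ((r t$3)^2) \<noteq> 0"
      "shifted_norm (\<mu> - 1) (r t$1) (r t$2) ((r t$3)^2) \<noteq> 0" for t
    using shifted_norm_nonzero[OF avoid(1)] shifted_norm_nonzero[of "r t" "\<mu> - 1"] avoid(2)
    by simp_all
  have Pe: "continuous_on UNIV (\<lambda>t. Pe1_inner \<mu> (r t$1) (r t$2) ((r t$3)^2) (r t$3 * v t$3) (v t$1) (v t$2))"
    "continuous_on UNIV (\<lambda>t. Pe2_inner \<mu> (r t$1) (r t$2) ((r t$3)^2) (r t$3 * v t$3) (v t$1) (v t$2))"
    by (rule continuous_on_Pe_inner[OF _ _ _ _ _ _ nonzero];
        intro continuous_intros continuous_on_components)+
  show "continuous_on UNIV (\<lambda>t. Jj j \<mu> (r t, v t))" "continuous_on UNIV (\<lambda>t. Kj j \<mu> (r t, v t))"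
    unfolding Jj_def J2_def J3_def Kj_def K2_def K3_def Let_def fst_conv snd_conv
      Pmat_e1_inner Pmat_e2_inner
    by (cases "j = 2"; simp only: if_True if_False simp_thms;
        intro continuous_intros Pe continuous_on_components)+
qed

lemma continuous_on_shifted_Jj_Kj:
  "continuous_on UNIV (\<lambda>\<tau>. Jj j \<mu> (r (s + \<tau>), v (s + \<tau>)))"
  "continuous_on UNIV (\<lambda>\<tau>. Kj j \<mu> (r (s + \<tau>), v (s + \<tau>)))"
  by (intro continuous_on_UNIV_shift continuous_on_Jj_Kj)+

lemma melnikov_nat_multiple_period:
  "melnikov j \<mu> r v (real n * T) s \<tau>0 = integral {0..real n * T}
     (\<lambda>\<tau>. Jj j \<mu> (r (s + \<tau>), v (s + \<tau>)) * cos (2*\<tau>0 + 2*\<tau>)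
        + Kj j \<mu> (r (s + \<tau>), v (s + \<tau>)) * sin (2*\<tau>0 + 2*\<tau>))"
  (is "_ = integral _ ?F")
proof -
  let ?Z = "\<lambda>\<tau>. if j = 2 then r (s + \<tau>) $ 3 * v (s + \<tau>) $ 3 else 0"
  have "?F integrable_on {0..real n * T}"
    by (intro integrable_on_interval_if_continuous_on_UNIV
        continuous_intros continuous_on_shifted_Jj_Kj)
  moreover have "?Z integrable_on {0..real n * T}"
    by (cases "j = 2") (auto intro!: integrable_on_interval_if_continuous_on_UNIV continuous_intros
        continuous_on_shifted_components)
  moreover have "integral {0..real n * T} ?Z = 0"
  proof (cases "j = 2")
    case True
    have "((\<lambda>t. (r t $ 3)^2 / 2) has_real_derivative r t $ 3 * v t $ 3) (at t)" for t
      by (auto intro!: derivative_eq_intros component_deriv)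
    from integral_derivative_periodic_eq_0[OF this] True period show ?thesis
      by (simp add: periodic_add_nat_multiple[of r, OF per(1)])
  qed simp
  ultimately show ?thesis
    unfolding melnikov_def hj_inner_velocity
    by (simp add: Henstock_Kurzweil_Integration.integral_diff distrib_left)
qed

lemma Jj_Kj_reflection_symmetric:
  assumes sym: "\<And>\<tau>. 0 \<le> \<tau> \<Longrightarrow> \<tau> \<le> T / 2 \<Longrightarrow>
          r (s + T - \<tau>) $ 1 = r (s + \<tau>) $ 1 \<and> v (s + T - \<tau>) $ 1 = - v (s + \<tau>) $ 1 \<and>
          r (s + T - \<tau>) $ 2 = - r (s + \<tau>) $ 2 \<and> v (s + T - \<tau>) $ 2 = v (s + \<tau>) $ 2 \<and>
          r (s + T - \<tau>) $ 3 * v (s + T - \<tau>) $ 3 = - (r (s + \<tau>) $ 3 * v (s + \<tau>) $ 3)"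
    and \<tau>: "0 \<le> \<tau>" "\<tau> \<le> T / 2"
  shows "Jj j \<mu> (r (s + (T - \<tau>)), v (s + (T - \<tau>))) = - Jj j \<mu> (r (s + \<tau>), v (s + \<tau>))"
    "Kj j \<mu> (r (s + (T - \<tau>)), v (s + (T - \<tau>))) = Kj j \<mu> (r (s + \<tau>), v (s + \<tau>))"
proof -
  have "(r (s + T - \<tau>) $ 3)^2 = (r (s + \<tau>) $ 3)^2"
    using square_reflection_eq_if_product_antisymmetric[OF component_deriv _ \<tau>] sym by blast
  then show "Jj j \<mu> (r (s + (T - \<tau>)), v (s + (T - \<tau>))) = - Jj j \<mu> (r (s + \<tau>), v (s + \<tau>))"
    "Kj j \<mu> (r (s + (T - \<tau>)), v (s + (T - \<tau>))) = Kj j \<mu> (r (s + \<tau>), v (s + \<tau>))"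
    using sym[OF \<tau>] by (simp_all add: Jj_Kj_reflection add_diff_eq)
qed


lemma melnikov_coprime_multiple_period_eq_0:
  assumes "a > 1" "coprime a b" "real a * T = real b * pi"
  shows "melnikov j \<mu> r v (real a * T) s \<tau>0 = 0"
  unfolding melnikov_nat_multiple_period
  by (rule integral_cos_sin_coprime_multiple_period_eq_0
      [OF continuous_on_shifted_Jj_Kj[where j = j and s = s] period _ _ assms])
    (simp_all add: add.assoc[symmetric] per)

lemma melnikov_reflection_symmetric:
  assumes sym: "\<And>\<tau>. 0 \<le> \<tau> \<Longrightarrow> \<tau> \<le> T / 2 \<Longrightarrow>
          r (s + T - \<tau>) $ 1 = r (s + \<tau>) $ 1 \<and> v (s + T - \<tau>) $ 1 = - v (s + \<tau>) $ 1 \<and>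
          r (s + T - \<tau>) $ 2 = - r (s + \<tau>) $ 2 \<and> v (s + T - \<tau>) $ 2 = v (s + \<tau>) $ 2 \<and>
          r (s + T - \<tau>) $ 3 * v (s + T - \<tau>) $ 3 = - (r (s + \<tau>) $ 3 * v (s + \<tau>) $ 3)"
    and Tb: "T = real b * pi"
  shows "melnikov j \<mu> r v T s \<tau>0 = 2 * sin (2 * \<tau>0) *
      integral {0..T/2} (\<lambda>\<tau>. Kj j \<mu> (r (s + \<tau>), v (s + \<tau>)) * cos (2 * \<tau>)
                           - Jj j \<mu> (r (s + \<tau>), v (s + \<tau>)) * sin (2 * \<tau>))"
proof -
  from integral_cos_sin_reflection_symmetric[OF continuous_on_shifted_Jj_Kj period Tb]
  have "integral {0..T} (\<lambda>\<tau>. Jj j \<mu> (r (s + \<tau>), v (s + \<tau>)) * cos (2 * \<tau>0 + 2 * \<tau>)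
                             + Kj j \<mu> (r (s + \<tau>), v (s + \<tau>)) * sin (2 * \<tau>0 + 2 * \<tau>))
      = 2 * sin (2 * \<tau>0) * integral {0..T/2} (\<lambda>\<tau>. Kj j \<mu> (r (s + \<tau>), v (s + \<tau>)) * cos (2 * \<tau>)
                                              - Jj j \<mu> (r (s + \<tau>), v (s + \<tau>)) * sin (2 * \<tau>))"
    by (simp add: Jj_Kj_reflection_symmetric[OF sym])
  then show ?thesis
    using melnikov_nat_multiple_period[where n = 1] by simp
qed

end

theorem proposition3:
  fixes \<mu> T s :: real and j a b :: nat
    and r v :: "real \<Rightarrow> real^3"
  assumes mu: "0 < \<mu>" "\<mu> < 1"
    and j: "j \<in> {2, 3}"
    and T: "T > 0"
    and ab: "a > 0" "b > 0" "coprime a b" "real a * T = real b * pi"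
    and deriv: "\<And>t. (r has_vector_derivative v t) (at t)"
    and cont: "continuous_on UNIV v"
    and per: "\<And>t. r (t + T) = r t" "\<And>t. v (t + T) = v t"
    and avoid: "\<And>t. r t \<noteq> vector [- \<mu>, 0, 0]" "\<And>t. r t \<noteq> vector [1 - \<mu>, 0, 0]"
    and sym: "\<And>\<tau>. 0 \<le> \<tau> \<Longrightarrow> \<tau> \<le> T / 2 \<Longrightarrow>
          r (s + T - \<tau>) $ 1 = r (s + \<tau>) $ 1 \<and> v (s + T - \<tau>) $ 1 = - v (s + \<tau>) $ 1 \<and>
          r (s + T - \<tau>) $ 2 = - r (s + \<tau>) $ 2 \<and> v (s + T - \<tau>) $ 2 = v (s + \<tau>) $ 2 \<and>
          r (s + T - \<tau>) $ 3 * v (s + T - \<tau>) $ 3 = - (r (s + \<tau>) $ 3 * v (s + \<tau>) $ 3)"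
  shows "(\<forall>\<tau>0. melnikov j \<mu> r v (real a * T) s \<tau>0 =
            2 * (if a = 1 then sin (2 * \<tau>0) else 0) *
              integral {0..T/2} (\<lambda>\<tau>. Kj j \<mu> (r (s + \<tau>), v (s + \<tau>)) * cos (2 * \<tau>)
                                     - Jj j \<mu> (r (s + \<tau>), v (s + \<tau>)) * sin (2 * \<tau>)))
       \<and> (a > 1 \<longrightarrow> (\<forall>s' \<tau>0. melnikov j \<mu> r v (real a * T) s' \<tau>0 = 0))
       \<and> (a = 1 \<longrightarrow> (\<forall>k::int. melnikov j \<mu> r v (real a * T) s (of_int k * pi / 2) = 0))"
proof -
  interpret periodic_orbit \<mu> T r v
    using T deriv cont per avoid by unfold_locales
  have one_period: "melnikov j \<mu> r v T s \<tau>0 = 2 * sin (2 * \<tau>0) *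
      integral {0..T/2} (\<lambda>\<tau>. Kj j \<mu> (r (s + \<tau>), v (s + \<tau>)) * cos (2 * \<tau>)
                           - Jj j \<mu> (r (s + \<tau>), v (s + \<tau>)) * sin (2 * \<tau>))"
    if "a = 1" for \<tau>0
    using melnikov_reflection_symmetric[OF sym] that ab(4) by simp
  have "sin (2 * (of_int k * pi / 2)) = 0" for k :: int
    using sin_times_pi_eq_0[of "of_int k"] by simp
  with melnikov_coprime_multiple_period_eq_0[OF _ ab(3,4)] one_period ab(1) show ?thesis
    by (cases "a = 1") auto
qed

end
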